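(* Let $\Omega\subseteq\mathbb{R}^n$ be closed and convex, $f:\mathbb{R}^n\to\mathbb{R}$ continuously differentiable, and $h:\mathbb{R}^n\to(-\infty,+\infty]$ proper, lower semicontinuous and convex with $\mathrm{dom}\,h$ closed, bounded and contained in $\Omega$; let $\phi = f+h$. Let $A_{k-1}>0$, $a_{k-1}=\frac{1+\sqrt{1+4A_{k-1}}}{2}$, $A_k=A_{k-1}+a_{k-1}$. Let $y_{k-1}\in\mathrm{dom}\,h$, $x_{k-1}\in\Omega$, $\tilde x_k = \frac{A_{k-1}}{A_k}y_{k-1}+\frac{a_{k-1}}{A_k}x_{k-1}$, $\lambda_k>0$, $\tau_k\ge0$ and $\gamma\in(0,1)$. Let $$y_k=\operatorname{argmin}_{u\in\mathbb{R}^n}\left\{\ell_f(u;\tilde x_k)+h(u)+\frac{1+\tau_k}{2\lambda_k}\|u-\tilde x_k\|^2\right\},$$ with $\ell_f(u;\tilde x_k) := f(\tilde x_k)+\langle\nabla f(\tilde x_k),u-\tilde x_k\rangle$, and assume that either $y_k=\tilde x_k$, or $U_k\lambda_k\le\gamma$ where $U_k := \frac{2[f(y_k)-\ell_f(y_k;\tilde x_k)]}{\|y_k-\tilde x_k\|^2}$. Define $$\tilde\gamma_k(u):=\ell_f(u;\tilde x_k)+h(u)+\frac{\tau_k}{2\lambda_k}\|u-\tilde x_k\|^2,\qquad \gamma_k(u):=\tilde\gamma_k(y_k)+\frac{1}{\lambda_k}\langle\tilde x_k-y_k,u-y_k\rangle+\frac{\tau_k}{2\lambda_k}\|u-y_k\|^2,$$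 and let $x_k$ be the unique minimizer over $u\in\Omega$ of $a_{k-1}\gamma_k(u)+\frac{1}{2\lambda_k}\|u-x_{k-1}\|^2$. Then for every $u\in\Omega$, $$\lambda_kA_k\phi(y_k)+\frac{\tau_ka_{k-1}+1}{2}\|u-x_k\|^2+\frac{(1-\gamma)A_k}{2}\|y_k-\tilde x_k\|^2 \le \lambda_kA_{k-1}\gamma_k(y_{k-1})+\lambda_ka_{k-1}\gamma_k(u)+\frac12\|u-x_{k-1}\|^2 .$$
   Context: $\|\cdot\|$ and $\langle\cdot,\cdot\rangle$ are the Euclidean norm and inner product on $\mathbb{R}^n$; $\mathrm{dom}\,h=\{u:h(u)<+\infty\}$. *)

theory Defs
  imports "HOL-Analysis.Analysis"
begin

definition edom :: "('a \<Rightarrow> ereal) \<Rightarrow> 'a set" where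
  "edom h = {u. h u < \<infinity>}"

definition proper_fun :: "('a \<Rightarrow> ereal) \<Rightarrow> bool" where
  "proper_fun h \<longleftrightarrow> (\<forall>u. h u \<noteq> -\<infinity>) \<and> edom h \<noteq> {}"

definition lsc_fun :: "('a::topological_space \<Rightarrow> ereal) \<Rightarrow> bool" where
  "lsc_fun h \<longleftrightarrow> (\<forall>c::ereal. closed {u. h u \<le> c})"

definition convex_efun :: "('a::real_vector \<Rightarrow> ereal) \<Rightarrow> bool" where
  "convex_efun h \<longleftrightarrow> convex (edom h) \<and> convex_on (edom h) (\<lambda>u. real_of_ereal (h u))"

definition lin_f :: "('a::real_inner \<Rightarrow> real) \<Rightarrow> ('a \<Rightarrow> 'a) \<Rightarrow> 'a \<Rightarrow> 'a \<Rightarrow> real" where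
  "lin_f f g x u = f x + inner (g x) (u - x)"

end

theory Submission
  imports Defs
begin

text \<open>Three estimates are added up. The step to \<open>x1\<close> minimises over the convex set \<open>\<Omega>\<close> a
  quadratic of curvature \<open>(tau a0 + 1)/lam\<close>, so its objective grows quadratically away from
  \<open>x1\<close>. The model \<open>gk\<close> lies above its affine part at \<open>y1\<close>; since
  \<open>A1 xt = A0 y0 + a0 x0\<close> and \<open>a0\<^sup>2 = A1\<close>, the affine parts at \<open>y0\<close> and \<open>x1\<close> together with
  \<open>\<parallel>x1 - x0\<parallel>\<^sup>2/2\<close> are at least \<open>A1 \<parallel>y1 - xt\<parallel>\<^sup>2/2\<close>, by completing a square. Finally
  \<open>gtil y1 \<ge> \<ell>\<^sub>f(y1) + h y1\<close>, and the descent condition bounds \<open>f y1 - \<ell>\<^sub>f(y1)\<close> by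
  \<open>gam/(2 lam) \<parallel>y1 - xt\<parallel>\<^sup>2\<close>.\<close>

lemma nonneg_if_quadratic_perturbation_nonneg:
  fixes L K :: real
  assumes K: "K \<ge> 0" and H: "\<And>t. 0 < t \<Longrightarrow> t \<le> 1 \<Longrightarrow> 0 \<le> t * L + t\<^sup>2 * K"
  shows "L \<ge> 0"
proof (rule ccontr)
  assume "\<not> L \<ge> 0"
  hence L: "L < 0" by simp
  define t where "t = min 1 (- L / (K + 1))"
  have t0: "t > 0" and t1: "t \<le> 1"
    using L K by (auto simp: t_def divide_neg_pos)
  have "t * K \<le> (- L / (K + 1)) * K"
    using K by (intro mult_right_mono) (simp_all add: t_def)
  also have "\<dots> < - L" using L K by (simp add: field_simps)
  finally have "t * (L + t * K) < 0" using t0 by (simp add: mult_pos_neg)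
  with H[OF t0 t1] show False by (simp add: algebra_simps power2_eq_square)
qed

lemma norm_add_scaleR_sq:
  fixes a d :: "'a::real_inner"
  shows "(norm (a + t *\<^sub>R d))\<^sup>2 = (norm a)\<^sup>2 + 2 * t * inner a d + t\<^sup>2 * (norm d)\<^sup>2"
  unfolding power2_norm_eq_inner by (simp add: inner_add inner_commute algebra_simps power2_eq_square)

text \<open>On the segment from the minimiser \<open>x\<close> to \<open>u\<close> the quadratic is \<open>q x + t L + t\<^sup>2 K\<close>;
  minimality forces \<open>L \<ge> 0\<close>, and \<open>t = 1\<close> gives the bound.\<close>
lemma quadratic_growth_at_constrained_min:
  fixes b x u :: "'a::real_inner"
  assumes q: "\<And>v. q v = c + inner b v + \<mu> / 2 * (norm v)\<^sup>2"
    and "convex S" "x \<in> S" "u \<in> S" "\<mu> \<ge> 0"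
    and min: "\<And>v. v \<in> S \<Longrightarrow> q x \<le> q v"
  shows "q x + \<mu> / 2 * (norm (u - x))\<^sup>2 \<le> q u"
proof -
  define d where "d = u - x"
  define L where "L = inner b d + \<mu> * inner x d"
  define K where "K = \<mu> / 2 * (norm d)\<^sup>2"
  have along: "q (x + t *\<^sub>R d) = q x + t * L + t\<^sup>2 * K" for t
    unfolding q L_def K_def norm_add_scaleR_sq by (simp add: inner_add_right algebra_simps)
  have "L \<ge> 0"
  proof (rule nonneg_if_quadratic_perturbation_nonneg)
    show "K \<ge> 0" using \<open>\<mu> \<ge> 0\<close> by (simp add: K_def)
  next
    fix t :: real assume t: "0 < t" "t \<le> 1"
    have "x + t *\<^sub>R d = (1 - t) *\<^sub>R x + t *\<^sub>R u" by (simp add: d_def algebra_simps)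
    also have "\<dots> \<in> S" using assms t by (simp add: convexD)
    finally show "0 \<le> t * L + t\<^sup>2 * K" using min along by fastforce
  qed
  with along[of 1] show ?thesis by (simp add: K_def d_def)
qed

lemma prox_quadratic_growth:
  fixes x0 x u y z :: "'a::real_inner"
  assumes g: "\<And>v. lam * g v = c + inner z v + tau / 2 * (norm (v - y))\<^sup>2"
    and "convex S" "x \<in> S" "u \<in> S" "lam > 0" "a \<ge> 0" "tau \<ge> 0"
    and min: "\<And>v. v \<in> S \<Longrightarrow> a * g x + 1 / (2 * lam) * (norm (x - x0))\<^sup>2
                             \<le> a * g v + 1 / (2 * lam) * (norm (v - x0))\<^sup>2"
  shows "lam * a * g x + 1 / 2 * (norm (x - x0))\<^sup>2 + (tau * a + 1) / 2 * (norm (u - x))\<^sup>2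
         \<le> lam * a * g u + 1 / 2 * (norm (u - x0))\<^sup>2"
proof -
  define q where "q v = lam * a * g v + 1 / 2 * (norm (v - x0))\<^sup>2" for v
  have norm_diff: "(norm (v - w))\<^sup>2 = (norm v)\<^sup>2 - 2 * inner w v + (norm w)\<^sup>2" for v w :: 'a
    unfolding power2_norm_eq_inner by (simp add: inner_diff inner_commute)
  have "q v = (a * (c + tau / 2 * (norm y)\<^sup>2) + 1 / 2 * (norm x0)\<^sup>2)
              + inner (a *\<^sub>R z - (a * tau) *\<^sub>R y - x0) v + (tau * a + 1) / 2 * (norm v)\<^sup>2" for v
  proof -
    have "lam * a * g v = a * (c + inner z v + tau / 2 * (norm (v - y))\<^sup>2)"
      by (metis g mult.commute mult.left_commute)
    then show ?thesis
      unfolding q_def norm_diff by (simp add: inner_diff_left inner_commute algebra_simps add_divide_distrib)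
  qed
  moreover have "q x \<le> q v" if "v \<in> S" for v
    using mult_left_mono[OF min[OF that], of lam] \<open>lam > 0\<close> by (simp add: q_def algebra_simps)
  ultimately have "q x + (tau * a + 1) / 2 * (norm (u - x))\<^sup>2 \<le> q u"
    using assms(2-7) by (intro quadratic_growth_at_constrained_min) auto
  then show ?thesis by (simp add: q_def)
qed

lemma accelerated_step_size:
  fixes A a :: real
  assumes "A \<ge> 0" and a: "a = (1 + sqrt (1 + 4 * A)) / 2"
  shows "a > 0" "a\<^sup>2 = A + a"
proof -
  have s: "(sqrt (1 + 4 * A))\<^sup>2 = 1 + 4 * A" using assms by simp
  have "sqrt (1 + 4 * A) \<ge> 0" using assms by simp
  then show "a > 0" unfolding a by (simp add: add_pos_nonneg)
  show "a\<^sup>2 = A + a" using s by (simp add: a power2_eq_square field_simps)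
qed

lemma accelerated_three_point_bound:
  fixes x0 x1 y0 y1 xt :: "'a::real_inner"
  assumes "A1 = A0 + a0" "a0\<^sup>2 = A1" "A1 *\<^sub>R xt = A0 *\<^sub>R y0 + a0 *\<^sub>R x0"
  shows "A1 / 2 * (norm (xt - y1))\<^sup>2
         \<le> A0 * inner (xt - y1) (y0 - y1) + a0 * inner (xt - y1) (x1 - y1) + 1 / 2 * (norm (x1 - x0))\<^sup>2"
proof -
  define w where "w = xt - y1"
  define e where "e = x1 - x0"
  have "A0 *\<^sub>R (y0 - y1) + a0 *\<^sub>R (x1 - y1) = A1 *\<^sub>R w + a0 *\<^sub>R e"
    using assms(1,3) by (simp add: w_def e_def algebra_simps)
  hence "A0 * inner w (y0 - y1) + a0 * inner w (x1 - y1) = A1 * (norm w)\<^sup>2 + a0 * inner w e"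
    by (metis inner_add_right inner_scaleR_right power2_norm_eq_inner)
  moreover have "0 \<le> (norm e)\<^sup>2 + 2 * a0 * inner e w + a0\<^sup>2 * (norm w)\<^sup>2"
    by (metis norm_add_scaleR_sq zero_le_power2)
  ultimately show ?thesis using assms(2) by (simp add: w_def [symmetric] e_def [symmetric] inner_commute)
qed

lemma descent_condition_bound:
  fixes y xt :: "'a::real_inner"
  assumes descent: "y = xt \<or> (2 * (f y - lin_f f g xt y) / (norm (y - xt))\<^sup>2) * lam \<le> gam"
    and model: "lam * (lin_f f g xt y + H) \<le> lam * G"
  shows "lam * (f y + H) + (1 - gam) / 2 * (norm (y - xt))\<^sup>2 \<le> lam * G + 1 / 2 * (norm (y - xt))\<^sup>2"
proof -
  have "2 * lam * (f y - lin_f f g xt y) \<le> gam * (norm (y - xt))\<^sup>2"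
  proof (cases "y = xt")
    case False
    then have "(norm (y - xt))\<^sup>2 > 0" by simp
    with False descent show ?thesis by (simp add: field_simps)
  qed (simp add: lin_f_def)
  with model show ?thesis by (simp add: algebra_simps diff_divide_distrib)
qed

theorem lemma4p7:
  fixes \<Omega> :: "(real^'n) set"
    and f :: "real^'n \<Rightarrow> real" and gradf :: "real^'n \<Rightarrow> real^'n"
    and h :: "real^'n \<Rightarrow> ereal"
    and A0 a0 A1 lam tau gam :: real
    and y0 x0 xt y1 x1 :: "real^'n"
  assumes \<Omega>: "closed \<Omega>" "convex \<Omega>"
    and f_C1: "\<And>x. (f has_derivative (\<lambda>v. inner (gradf x) v)) (at x)" "continuous_on UNIV gradf"
    and h_proper: "proper_fun h" and h_lsc: "lsc_fun h" and h_convex: "convex_efun h"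
    and dom_h: "closed (edom h)" "bounded (edom h)" "edom h \<subseteq> \<Omega>"
    and A0_pos: "A0 > 0"
    and a0_def: "a0 = (1 + sqrt (1 + 4 * A0)) / 2"
    and A1_def: "A1 = A0 + a0"
    and y0: "y0 \<in> edom h" and x0: "x0 \<in> \<Omega>"
    and xt_def: "xt = (A0 / A1) *\<^sub>R y0 + (a0 / A1) *\<^sub>R x0"
    and lam: "lam > 0" and tau: "tau \<ge> 0" and gam: "0 < gam" "gam < 1"
    and y1_min: "\<And>u. ereal (lin_f f gradf xt y1) + h y1 + ereal ((1 + tau) / (2 * lam) * (norm (y1 - xt))\<^sup>2)
                   \<le> ereal (lin_f f gradf xt u) + h u + ereal ((1 + tau) / (2 * lam) * (norm (u - xt))\<^sup>2)"
    and descent: "y1 = xt \<or> (2 * (f y1 - lin_f f gradf xt y1) / (norm (y1 - xt))\<^sup>2) * lam \<le> gam"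
    and gtil_def: "gtil = (\<lambda>u. lin_f f gradf xt u + real_of_ereal (h u) + tau / (2 * lam) * (norm (u - xt))\<^sup>2)"
    and gk_def: "gk = (\<lambda>u. gtil y1 + (1 / lam) * inner (xt - y1) (u - y1) + tau / (2 * lam) * (norm (u - y1))\<^sup>2)"
    and x1_in: "x1 \<in> \<Omega>"
    and x1_min: "\<And>u. u \<in> \<Omega> \<Longrightarrow> a0 * gk x1 + 1 / (2 * lam) * (norm (x1 - x0))\<^sup>2
                                 \<le> a0 * gk u + 1 / (2 * lam) * (norm (u - x0))\<^sup>2"
  shows "\<forall>u\<in>\<Omega>. lam * A1 * (f y1 + real_of_ereal (h y1)) + (tau * a0 + 1) / 2 * (norm (u - x1))\<^sup>2
            + (1 - gam) * A1 / 2 * (norm (y1 - xt))\<^sup>2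
          \<le> lam * A0 * gk y0 + lam * a0 * gk u + 1 / 2 * (norm (u - x0))\<^sup>2"
proof -
  define G where "G = gtil y1"
  define w where "w = xt - y1"
  have a0: "a0 > 0" "a0\<^sup>2 = A1"
    using accelerated_step_size[OF _ a0_def] A0_pos A1_def by auto
  have gk_model: "lam * gk v = (lam * G - inner w y1) + inner w v + tau / 2 * (norm (v - y1))\<^sup>2" for v
    using lam by (simp add: gk_def G_def w_def inner_diff_right algebra_simps)
  have gk_ge: "lam * G + inner w (v - y1) \<le> lam * gk v" for v
    using tau by (simp add: gk_model inner_diff_right)
  note growth = prox_quadratic_growth[OF gk_model \<Omega>(2) x1_in _ lam _ tau x1_min]
  have "A1 *\<^sub>R xt = A0 *\<^sub>R y0 + a0 *\<^sub>R x0"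
    using A0_pos a0(1) by (simp add: xt_def A1_def scaleR_add_right)
  from accelerated_three_point_bound[OF A1_def a0(2) this, of y1 x1]
    mult_left_mono[OF gk_ge[of y0], of A0] mult_left_mono[OF gk_ge[of x1], of a0] A0_pos a0(1)
  have lower: "lam * A1 * G + A1 / 2 * (norm (y1 - xt))\<^sup>2
      \<le> lam * A0 * gk y0 + lam * a0 * gk x1 + 1 / 2 * (norm (x1 - x0))\<^sup>2"
    by (simp add: w_def A1_def norm_minus_commute algebra_simps)
  have "lam * (lin_f f gradf xt y1 + real_of_ereal (h y1)) \<le> lam * G"
    using tau lam by (simp add: G_def gtil_def)
  from mult_left_mono[OF descent_condition_bound[OF descent this], of A1] A0_pos a0(1) A1_def
  have upper: "lam * A1 * (f y1 + real_of_ereal (h y1)) + (1 - gam) * A1 / 2 * (norm (y1 - xt))\<^sup>2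
      \<le> lam * A1 * G + A1 / 2 * (norm (y1 - xt))\<^sup>2"
    by (simp add: algebra_simps)
  show ?thesis
    using growth a0(1) lower upper by fastforce
qed

end
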